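(* For all tests $b,c$, all $e,f,g,h\in\mathrm{Exp}$ and all $r,s,t,u\in S$: (DF1) $\odot t;(e\oplus_{r,s}f)\equiv e\oplus_{tr,ts}f$; (DF2) $e+_b(f+_cg)\equiv(e+_bf)+_{b+c}g$; (DF3) $e+_b\mathtt 0\equiv b;e$; (DF4) $b;(e+_bf)\equiv b;e$; (DF5) $(e+_bf)\oplus_{r,s}g\equiv(e\oplus_{r,s}g)+_b(f\oplus_{r,s}g)$; (DF6) $(e+_bf)\oplus_{r,s}(g+_bh)\equiv(e\oplus_{r,s}g)+_b(f\oplus_{r,s}h)$; (DF7) $e+_{\mathtt 1}f\equiv e$; (DF8) $b;(e+_cf)\equiv b;e+_cb;f$; (DF9) $b;(e+_cf)\equiv b;(b;e+_cf)$; (DF10) $\odot r;\odot s\equiv\odot(rs)$; (DF11) $\odot r;(e+_bf)\equiv\odot r;e+_b\odot r;f$; (DF12) $g\oplus_{r,s}\odot0\equiv\odot r;g$; (DF13) $b;(e\oplus_{r,s}f)\equiv b;(b;e\oplus_{r,s}f)$; (DF14) $g\oplus_{s,t}(e\oplus_{r,u}\odot0)\equiv g\oplus_{s,tr}e$.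
   Context: Fix a finite set $T$ of primitive tests, a set $\mathrm{Act}$ of atomic actions, a set $\mathrm{Out}$ of return values, and a semiring $(S,+,\cdot,0,1)$ that is positive, refinement and Conway (with ${}^*:S\to S$ satisfying $(a+b)^*=a^*(ba^* )^*$, $(ab)^*=1+a(ba)^*b$). Tests: $b,c\in\mathrm{BExp}::=\mathtt{0}\mid\mathtt{1}\mid t\ (t\in T)\mid\bar b\mid b+c\mid bc$ ($\mathtt 0,\mathtt 1$ false/true, distinct from semiring $0,1$); $\equiv_{BA}$ is Boolean equivalence; $\mathrm{At}$ is the finite set of atoms of the free Boolean algebra on $T$; $\alpha\le b$ means $\alpha$ entails $b$. Expressions: $e,f\in\mathrm{Exp}::= p\in\mathrm{Act}\mid b\in\mathrm{BExp}\mid e+_b f\mid e;f\mid e^{(b)}\mid v\in\mathrm{Out}\mid e\oplus_{r,s} f\ (r,s\in S)$; $\odot r:=\mathtt 1\oplus_{r,0}\mathtt 0$. $E:\mathrm{Exp}\to S^{\mathrm{At}}$: $E(p)_\alpha=E(v)_\alpha=0$; $E(b)_\alpha=1$ if $\alpha\le b$ else $0$; $E(e\oplus_{r,s}f)_\alpha=rE(e)_\alpha+sE(f)_\alpha$; $E(e+_bf)_\alpha=E(e)_\alpha$ if $\alpha\le b$ else $E(f)_\alpha$; $E(e;f)_\alpha=E(e)_\alpha E(f)_\alpha$; $E(e^{(b)})_\alpha=E(\bar b)_\alpha$. The relation $\equiv$ is the smallest congruence on $\mathrm{Exp}$ (tests taken up to $\equiv_{BA}$; sequencing binds tighter than $\oplus$,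 $\odot$ binds tightest) containing, for all $e,f,g\in\mathrm{Exp}$, tests $b,c$, $v\in\mathrm{Out}$, $r,s,t,u\in S$: (G1) $e+_be\equiv e$; (G2) $e+_bf\equiv b;e+_bf$; (G3) $e+_bf\equiv f+_{\bar b}e$; (G4) $(e+_bf)+_cg\equiv e+_{bc}(f+_cg)$; (D1) $e\oplus_{r,s}(f+_bg)\equiv(e\oplus_{r,s}f)+_b(e\oplus_{r,s}g)$; (D2) $e\oplus_{r,s}(f\oplus_{t,u}g)\equiv e\oplus_{r,1}(f\oplus_{st,su}g)$; (D3) $b;(e\oplus_{r,s}f)\equiv b;(b;e\oplus_{r,s}b;f)$; (S1) $\mathtt 1;e\equiv e\equiv e;\mathtt 1$; (S2) $(e;f);g\equiv e;(f;g)$; (S3) $\mathtt 0;e\equiv\mathtt 0$; (S4) $(e\oplus_{r,s}f);g\equiv e;g\oplus_{r,s}f;g$; (S5) $(e+_bf);g\equiv e;g+_bf;g$; (S6) $v;e\equiv v$; (S7) $b;c\equiv bc$; (L1) $e^{(b)}\equiv e;e^{(b)}+_b\mathtt 1$; (C1) $\odot1\equiv\mathtt 1$; (C2) $\odot0;e\equiv\odot0$; (W1) $e\oplus_{r,s}e\equiv\odot(r+s);e$; (W2) $e\oplus_{r,s}f\equiv f\oplus_{s,r}e$; (W3) $e\oplus_{r,s}(f\oplus_{t,u}g)\equiv(e\oplus_{r,st}f)\oplus_{1,su}g$; (W4) $e\oplus_{ru,s}f\equiv(\odot u;e)\oplus_{r,s}f$; and closed under the rules (L2) if $e\equiv(f\oplus_{r,s}\mathtt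 1)+_cg$ then $c;e^{(b)}\equiv c;((\odot(s^*r);f;e^{(b)})+_b\mathtt 1)$; (F1) if $g\equiv e;g+_bf$ and $E(e)_\alpha=0$ for all $\alpha\in\mathrm{At}$ then $g\equiv e^{(b)};f$. *)

theory Defs
  imports Main
begin

datatype 't bexp = BFalse | BTrue | BPrim 't | BNot "'t bexp"
  | BOr "'t bexp" "'t bexp" | BAnd "'t bexp" "'t bexp"

text \<open>Atoms of the free Boolean algebra on a finite set T of primitive tests
  are valuations T \<Rightarrow> bool (T is the finite type 't).  \<open>bsat \<alpha> b\<close> means alpha entails b.\<close>

type_synonym 't atom = "'t \<Rightarrow> bool"

fun bsat :: "'t atom \<Rightarrow> 't bexp \<Rightarrow> bool" where
  "bsat \<alpha> BFalse = False"
| "bsat \<alpha> BTrue = True"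
| "bsat \<alpha> (BPrim t) = \<alpha> t"
| "bsat \<alpha> (BNot b) = (\<not> bsat \<alpha> b)"
| "bsat \<alpha> (BOr b c) = (bsat \<alpha> b \<or> bsat \<alpha> c)"
| "bsat \<alpha> (BAnd b c) = (bsat \<alpha> b \<and> bsat \<alpha> c)"

definition ba_equiv :: "'t bexp \<Rightarrow> 't bexp \<Rightarrow> bool" where
  "ba_equiv b c \<longleftrightarrow> (\<forall>\<alpha>. bsat \<alpha> b = bsat \<alpha> c)"

datatype ('a, 't, 'o, 's) exp =
    Act 'a
  | Test "'t bexp"
  | GChoice "('a, 't, 'o, 's) exp" "'t bexp" "('a, 't, 'o, 's) exp"
  | Seq "('a, 't, 'o, 's) exp" "('a, 't, 'o, 's) exp"
  | Loop "('a, 't, 'o, 's) exp" "'t bexp"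
  | Ret 'o
  | WChoice "('a, 't, 'o, 's) exp" 's 's "('a, 't, 'o, 's) exp"

definition odot :: "'s::{semiring_0,monoid_mult} \<Rightarrow> ('a, 't, 'o, 's) exp" where
  "odot r = WChoice (Test BTrue) r 0 (Test BFalse)"

fun E :: "('a, 't, 'o, 's::{semiring_0,monoid_mult}) exp \<Rightarrow> 't atom \<Rightarrow> 's" where
  "E (Act p) \<alpha> = 0"
| "E (Ret v) \<alpha> = 0"
| "E (Test b) \<alpha> = (if bsat \<alpha> b then 1 else 0)"
| "E (WChoice e r s f) \<alpha> = r * E e \<alpha> + s * E f \<alpha>"
| "E (GChoice e b f) \<alpha> = (if bsat \<alpha> b then E e \<alpha> else E f \<alpha>)"
| "E (Seq e f) \<alpha> = E e \<alpha> * E f \<alpha>"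
| "E (Loop e b) \<alpha> = (if bsat \<alpha> (BNot b) then 1 else 0)"

definition positive_semiring :: "'s::{semiring_0,monoid_mult} itself \<Rightarrow> bool" where
  "positive_semiring _ \<longleftrightarrow>
     (\<forall>a b::'s. a + b = 0 \<longrightarrow> a = 0 \<and> b = 0) \<and>
     (\<forall>a b::'s. a * b = 0 \<longrightarrow> a = 0 \<or> b = 0)"

definition refinement_semiring :: "'s::{semiring_0,monoid_mult} itself \<Rightarrow> bool" where
  "refinement_semiring _ \<longleftrightarrow>
     (\<forall>a b c d::'s. a + b = c + d \<longrightarrow>
        (\<exists>r1 r2 r3 r4. a = r1 + r2 \<and> b = r3 + r4 \<and> c = r1 + r3 \<and> d = r2 + r4))"

definition conway_star :: "('s::{semiring_0,monoid_mult} \<Rightarrow> 's) \<Rightarrow> bool" where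
  "conway_star st \<longleftrightarrow>
     (\<forall>a b. st (a + b) = st a * st (b * st a)) \<and>
     (\<forall>a b. st (a * b) = 1 + a * st (b * a) * b)"

inductive eqv :: "('s::{semiring_0,monoid_mult} \<Rightarrow> 's) \<Rightarrow> ('a, 't, 'o, 's) exp \<Rightarrow> ('a, 't, 'o, 's) exp \<Rightarrow> bool"
  for st :: "'s \<Rightarrow> 's" where
  refl: "eqv st e e"
| sym: "eqv st e f \<Longrightarrow> eqv st f e"
| trans: "eqv st e f \<Longrightarrow> eqv st f g \<Longrightarrow> eqv st e g"
| cong_GChoice: "eqv st e e' \<Longrightarrow> eqv st f f' \<Longrightarrow> eqv st (GChoice e b f) (GChoice e' b f')"
| cong_Seq: "eqv st e e' \<Longrightarrow> eqv st f f' \<Longrightarrow> eqv st (Seq e f) (Seq e' f')"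
| cong_Loop: "eqv st e e' \<Longrightarrow> eqv st (Loop e b) (Loop e' b)"
| cong_WChoice: "eqv st e e' \<Longrightarrow> eqv st f f' \<Longrightarrow> eqv st (WChoice e r s f) (WChoice e' r s f')"
| ba_Test: "ba_equiv b c \<Longrightarrow> eqv st (Test b) (Test c)"
| ba_GChoice: "ba_equiv b c \<Longrightarrow> eqv st (GChoice e b f) (GChoice e c f)"
| ba_Loop: "ba_equiv b c \<Longrightarrow> eqv st (Loop e b) (Loop e c)"
| G1: "eqv st (GChoice e b e) e"
| G2: "eqv st (GChoice e b f) (GChoice (Seq (Test b) e) b f)"
| G3: "eqv st (GChoice e b f) (GChoice f (BNot b) e)"
| G4: "eqv st (GChoice (GChoice e b f) c g) (GChoice e (BAnd b c) (GChoice f c g))"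
| D1: "eqv st (WChoice e r s (GChoice f b g)) (GChoice (WChoice e r s f) b (WChoice e r s g))"
| D2: "eqv st (WChoice e r s (WChoice f t u g)) (WChoice e r 1 (WChoice f (s * t) (s * u) g))"
| D3: "eqv st (Seq (Test b) (WChoice e r s f))
          (Seq (Test b) (WChoice (Seq (Test b) e) r s (Seq (Test b) f)))"
| S1a: "eqv st (Seq (Test BTrue) e) e"
| S1b: "eqv st e (Seq e (Test BTrue))"
| S2: "eqv st (Seq (Seq e f) g) (Seq e (Seq f g))"
| S3: "eqv st (Seq (Test BFalse) e) (Test BFalse)"
| S4: "eqv st (Seq (WChoice e r s f) g) (WChoice (Seq e g) r s (Seq f g))"
| S5: "eqv st (Seq (GChoice e b f) g) (GChoice (Seq e g) b (Seq f g))"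
| S6: "eqv st (Seq (Ret v) e) (Ret v)"
| S7: "eqv st (Seq (Test b) (Test c)) (Test (BAnd b c))"
| L1: "eqv st (Loop e b) (GChoice (Seq e (Loop e b)) b (Test BTrue))"
| C1: "eqv st (odot 1) (Test BTrue)"
| C2: "eqv st (Seq (odot 0) e) (odot 0)"
| W1: "eqv st (WChoice e r s e) (Seq (odot (r + s)) e)"
| W2: "eqv st (WChoice e r s f) (WChoice f s r e)"
| W3: "eqv st (WChoice e r s (WChoice f t u g)) (WChoice (WChoice e r (s * t) f) 1 (s * u) g)"
| W4: "eqv st (WChoice e (r * u) s f) (WChoice (Seq (odot u) e) r s f)"
| L2: "eqv st e (GChoice (WChoice f r s (Test BTrue)) c g) \<Longrightarrow>
       eqv st (Seq (Test c) (Loop e b))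
              (Seq (Test c) (GChoice (Seq (odot (st s * r)) (Seq f (Loop e b))) b (Test BTrue)))"
| F1: "eqv st g (GChoice (Seq e g) b f) \<Longrightarrow> (\<forall>\<alpha>. E e \<alpha> = 0) \<Longrightarrow>
       eqv st g (Seq (Loop e b) f)"

end

theory Submission
  imports Defs
begin

text \<open>All fourteen laws follow equationally from the axioms of \<open>\<equiv>\<close>.  Two independence tricks
  carry most of the work: \<open>e +_true f \<equiv> false +_false e\<close> does not mention \<open>f\<close>, hence
  \<open>e +_true f \<equiv> e +_true e \<equiv> e\<close>; likewise \<open>e \<oplus>_{1,0} f \<equiv> \<odot>0 \<oplus>_{1,1} e\<close>, hence
  \<open>e \<oplus>_{1,0} f \<equiv> e\<close>, to which the other weighted laws reduce.  For guarded choice, a test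
  \<open>b\<close> is \<open>true +_b false\<close>, so prefixing by \<open>b\<close> is \<open>e +_b false\<close>, and sequencing with
  tests becomes nesting of guarded choices, which G4 re-associates.\<close>

declare eqv.trans[trans]

lemma eqv_GChoice_BTrue: "eqv st (GChoice e BTrue f) e"
proof -
  have independent_of_f: "eqv st (GChoice e BTrue f) (GChoice (Test BFalse) BFalse e)" for f
  proof -
    have "eqv st (GChoice e BTrue f) (GChoice f (BNot BTrue) e)" by (rule eqv.G3)
    also have "eqv st \<dots> (GChoice f BFalse e)" by (rule eqv.ba_GChoice) (simp add: ba_equiv_def)
    also have "eqv st \<dots> (GChoice (Seq (Test BFalse) f) BFalse e)" by (rule eqv.G2)
    also have "eqv st \<dots> (GChoice (Test BFalse) BFalse e)" by (intro eqv.cong_GChoice eqv.refl eqv.S3)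
    finally show ?thesis .
  qed
  have "eqv st (GChoice e BTrue f) (GChoice e BTrue e)"
    by (rule eqv.trans[OF independent_of_f eqv.sym[OF independent_of_f]])
  also have "eqv st \<dots> e" by (rule eqv.G1)
  finally show ?thesis .
qed

lemma eqv_GChoice_BFalse: "eqv st (GChoice e BFalse f) f"
proof -
  have "eqv st (GChoice e BFalse f) (GChoice f (BNot BFalse) e)" by (rule eqv.G3)
  also have "eqv st \<dots> (GChoice f BTrue e)" by (rule eqv.ba_GChoice) (simp add: ba_equiv_def)
  also have "eqv st \<dots> f" by (rule eqv_GChoice_BTrue)
  finally show ?thesis .
qed

lemma eqv_Test_GChoice: "eqv st (Test b) (GChoice (Test BTrue) b (Test BFalse))"
proof -
  have "eqv st (Test b) (GChoice (Test b) b (Test b))" by (rule eqv.sym, rule eqv.G1)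
  also have "eqv st \<dots> (GChoice (Test b) (BNot b) (Test b))" by (rule eqv.G3)
  also have "eqv st \<dots> (GChoice (Seq (Test (BNot b)) (Test b)) (BNot b) (Test b))" by (rule eqv.G2)
  also have "eqv st \<dots> (GChoice (Test (BAnd (BNot b) b)) (BNot b) (Test b))"
    by (intro eqv.cong_GChoice eqv.S7 eqv.refl)
  also have "eqv st \<dots> (GChoice (Test BFalse) (BNot b) (Test b))"
    by (intro eqv.cong_GChoice eqv.ba_Test eqv.refl) (simp add: ba_equiv_def)
  also have "eqv st \<dots> (GChoice (Test b) (BNot (BNot b)) (Test BFalse))" by (rule eqv.G3)
  also have "eqv st \<dots> (GChoice (Test b) b (Test BFalse))"
    by (rule eqv.ba_GChoice) (simp add: ba_equiv_def)
  also have "eqv st \<dots> (GChoice (Test (BAnd b BTrue)) b (Test BFalse))"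
    by (intro eqv.cong_GChoice eqv.ba_Test eqv.refl) (simp add: ba_equiv_def)
  also have "eqv st \<dots> (GChoice (Seq (Test b) (Test BTrue)) b (Test BFalse))"
    by (intro eqv.cong_GChoice eqv.sym[OF eqv.S7] eqv.refl)
  also have "eqv st \<dots> (GChoice (Test BTrue) b (Test BFalse))" by (rule eqv.sym, rule eqv.G2)
  finally show ?thesis .
qed

lemma eqv_Seq_Test: "eqv st (Seq (Test b) e) (GChoice e b (Test BFalse))"
proof -
  have "eqv st (Seq (Test b) e) (Seq (GChoice (Test BTrue) b (Test BFalse)) e)"
    by (intro eqv.cong_Seq eqv_Test_GChoice eqv.refl)
  also have "eqv st \<dots> (GChoice (Seq (Test BTrue) e) b (Seq (Test BFalse) e))" by (rule eqv.S5)
  also have "eqv st \<dots> (GChoice e b (Test BFalse))" by (intro eqv.cong_GChoice eqv.S1a eqv.S3)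
  finally show ?thesis .
qed

lemma eqv_GChoice_BFalse_right: "eqv st (GChoice e b (Test BFalse)) (Seq (Test b) e)"
  by (rule eqv.sym, rule eqv_Seq_Test)

lemma eqv_Seq_Test_Test: "eqv st (Seq (Test b) (Seq (Test b) e)) (Seq (Test b) e)"
proof -
  have "eqv st (Seq (Test b) (Seq (Test b) e)) (Seq (Seq (Test b) (Test b)) e)"
    by (rule eqv.sym, rule eqv.S2)
  also have "eqv st \<dots> (Seq (Test (BAnd b b)) e)" by (intro eqv.cong_Seq eqv.S7 eqv.refl)
  also have "eqv st \<dots> (Seq (Test b) e)"
    by (intro eqv.cong_Seq eqv.ba_Test eqv.refl) (simp add: ba_equiv_def)
  finally show ?thesis .
qed

lemma eqv_Seq_Test_GChoice: "eqv st (Seq (Test c) (GChoice e b f)) (GChoice e (BAnd b c) (Seq (Test c) f))"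
proof -
  have "eqv st (Seq (Test c) (GChoice e b f)) (GChoice (GChoice e b f) c (Test BFalse))"
    by (rule eqv_Seq_Test)
  also have "eqv st \<dots> (GChoice e (BAnd b c) (GChoice f c (Test BFalse)))" by (rule eqv.G4)
  also have "eqv st \<dots> (GChoice e (BAnd b c) (Seq (Test c) f))"
    by (intro eqv.cong_GChoice eqv.refl eqv_GChoice_BFalse_right)
  finally show ?thesis .
qed

lemma eqv_Seq_Test_GChoice_BNot: "eqv st (Seq (Test (BNot b)) (GChoice e b f)) (Seq (Test (BNot b)) f)"
proof -
  have "eqv st (Seq (Test (BNot b)) (GChoice e b f))
      (GChoice e (BAnd b (BNot b)) (Seq (Test (BNot b)) f))"
    by (rule eqv_Seq_Test_GChoice)
  also have "eqv st \<dots> (GChoice e BFalse (Seq (Test (BNot b)) f))"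
    by (rule eqv.ba_GChoice) (simp add: ba_equiv_def)
  also have "eqv st \<dots> (Seq (Test (BNot b)) f)" by (rule eqv_GChoice_BFalse)
  finally show ?thesis .
qed

lemma eqv_GChoice_guard_right: "eqv st (GChoice e b f) (GChoice e b (Seq (Test (BNot b)) f))"
proof -
  have "eqv st (GChoice e b f) (GChoice f (BNot b) e)" by (rule eqv.G3)
  also have "eqv st \<dots> (GChoice (Seq (Test (BNot b)) f) (BNot b) e)" by (rule eqv.G2)
  also have "eqv st \<dots> (GChoice e (BNot (BNot b)) (Seq (Test (BNot b)) f))" by (rule eqv.G3)
  also have "eqv st \<dots> (GChoice e b (Seq (Test (BNot b)) f))"
    by (rule eqv.ba_GChoice) (simp add: ba_equiv_def)
  finally show ?thesis .
qed

lemma eqv_GChoice_GChoice_right: "eqv st (GChoice e b (GChoice f b g)) (GChoice e b g)"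
proof -
  have "eqv st (GChoice e b (GChoice f b g)) (GChoice e b (Seq (Test (BNot b)) (GChoice f b g)))"
    by (rule eqv_GChoice_guard_right)
  also have "eqv st \<dots> (GChoice e b (Seq (Test (BNot b)) g))"
    by (intro eqv.cong_GChoice eqv.refl eqv_Seq_Test_GChoice_BNot)
  also have "eqv st \<dots> (GChoice e b g)" by (rule eqv.sym, rule eqv_GChoice_guard_right)
  finally show ?thesis .
qed

lemma eqv_Seq_Test_GChoice_same: "eqv st (Seq (Test b) (GChoice e b f)) (Seq (Test b) e)"
proof -
  have "eqv st (Seq (Test b) (GChoice e b f)) (GChoice (GChoice e b f) b (Test BFalse))"
    by (rule eqv_Seq_Test)
  also have "eqv st \<dots> (GChoice e (BAnd b b) (GChoice f b (Test BFalse)))" by (rule eqv.G4)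
  also have "eqv st \<dots> (GChoice e b (GChoice f b (Test BFalse)))"
    by (rule eqv.ba_GChoice) (simp add: ba_equiv_def)
  also have "eqv st \<dots> (GChoice e b (Test BFalse))" by (rule eqv_GChoice_GChoice_right)
  also have "eqv st \<dots> (Seq (Test b) e)" by (rule eqv_GChoice_BFalse_right)
  finally show ?thesis .
qed

lemma eqv_Seq_Test_GChoice_distrib:
  "eqv st (Seq (Test b) (GChoice e c f)) (GChoice (Seq (Test b) e) c (Seq (Test b) f))"
proof -
  let ?bf = "GChoice f b (Test BFalse)"
  have "eqv st (Seq (Test b) (GChoice e c f)) (GChoice e (BAnd c b) ?bf)"
    by (rule eqv.trans[OF eqv_Seq_Test eqv.G4])
  also have "eqv st \<dots> (GChoice e (BAnd b c) (GChoice ?bf c ?bf))"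
    by (rule eqv.trans[OF eqv.ba_GChoice eqv.cong_GChoice[OF eqv.refl eqv.sym[OF eqv.G1]]])
      (auto simp add: ba_equiv_def)
  also have "eqv st \<dots> (GChoice (GChoice e b ?bf) c ?bf)" by (rule eqv.sym, rule eqv.G4)
  also have "eqv st \<dots> (GChoice (GChoice e b (Test BFalse)) c ?bf)"
    by (intro eqv.cong_GChoice eqv.refl eqv_GChoice_GChoice_right)
  also have "eqv st \<dots> (GChoice (Seq (Test b) e) c (Seq (Test b) f))"
    by (intro eqv.cong_GChoice eqv_GChoice_BFalse_right)
  finally show ?thesis .
qed

lemma eqv_Seq_Test_GChoice_guard_left:
  "eqv st (Seq (Test b) (GChoice e c f)) (Seq (Test b) (GChoice (Seq (Test b) e) c f))"
proof -
  have "eqv st (Seq (Test b) (GChoice e c f)) (GChoice (Seq (Test b) e) c (Seq (Test b) f))"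
    by (rule eqv_Seq_Test_GChoice_distrib)
  also have "eqv st \<dots> (GChoice (Seq (Test b) (Seq (Test b) e)) c (Seq (Test b) f))"
    by (intro eqv.cong_GChoice eqv.refl eqv.sym[OF eqv_Seq_Test_Test])
  also have "eqv st \<dots> (Seq (Test b) (GChoice (Seq (Test b) e) c f))"
    by (rule eqv.sym, rule eqv_Seq_Test_GChoice_distrib)
  finally show ?thesis .
qed

lemma eqv_GChoice_assoc: "eqv st (GChoice e b (GChoice f c g)) (GChoice (GChoice e b f) (BOr b c) g)"
proof -
  have "eqv st (Seq (Test (BNot b)) (GChoice f c g)) (GChoice f (BAnd c (BNot b)) (Seq (Test (BNot b)) g))"
    by (rule eqv_Seq_Test_GChoice)
  also have "eqv st \<dots> (GChoice f (BAnd (BOr b c) (BNot b)) (Seq (Test (BNot b)) g))"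
    by (rule eqv.ba_GChoice) (auto simp add: ba_equiv_def)
  also have "eqv st \<dots> (Seq (Test (BNot b)) (GChoice f (BOr b c) g))"
    by (rule eqv.sym, rule eqv_Seq_Test_GChoice)
  finally have outside_b: "eqv st (Seq (Test (BNot b)) (GChoice f c g))
      (Seq (Test (BNot b)) (GChoice f (BOr b c) g))" .
  have "eqv st (GChoice e b (GChoice f c g)) (GChoice e b (Seq (Test (BNot b)) (GChoice f c g)))"
    by (rule eqv_GChoice_guard_right)
  also have "eqv st \<dots> (GChoice e b (Seq (Test (BNot b)) (GChoice f (BOr b c) g)))"
    by (intro eqv.cong_GChoice eqv.refl outside_b)
  also have "eqv st \<dots> (GChoice e b (GChoice f (BOr b c) g))"
    by (rule eqv.sym, rule eqv_GChoice_guard_right)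
  also have "eqv st \<dots> (GChoice e (BAnd b (BOr b c)) (GChoice f (BOr b c) g))"
    by (rule eqv.ba_GChoice) (auto simp add: ba_equiv_def)
  also have "eqv st \<dots> (GChoice (GChoice e b f) (BOr b c) g)" by (rule eqv.sym, rule eqv.G4)
  finally show ?thesis .
qed

lemma eqv_WChoice_GChoice_left:
  "eqv st (WChoice (GChoice e b f) r s g) (GChoice (WChoice e r s g) b (WChoice f r s g))"
proof -
  have "eqv st (WChoice (GChoice e b f) r s g) (WChoice g s r (GChoice e b f))" by (rule eqv.W2)
  also have "eqv st \<dots> (GChoice (WChoice g s r e) b (WChoice g s r f))" by (rule eqv.D1)
  also have "eqv st \<dots> (GChoice (WChoice e r s g) b (WChoice f r s g))" by (intro eqv.cong_GChoice eqv.W2)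
  finally show ?thesis .
qed

lemma eqv_WChoice_GChoice_both:
  "eqv st (WChoice (GChoice e b f) r s (GChoice g b h)) (GChoice (WChoice e r s g) b (WChoice f r s h))"
proof -
  have "eqv st (WChoice (GChoice e b f) r s (GChoice g b h))
      (GChoice (GChoice (WChoice e r s g) b (WChoice e r s h)) b
        (GChoice (WChoice f r s g) b (WChoice f r s h)))"
    by (rule eqv.trans[OF eqv_WChoice_GChoice_left eqv.cong_GChoice[OF eqv.D1 eqv.D1]])
  also have "eqv st \<dots> (GChoice (WChoice e r s g) (BAnd b b) (GChoice (WChoice e r s h) b
        (GChoice (WChoice f r s g) b (WChoice f r s h))))" by (rule eqv.G4)
  also have "eqv st \<dots> (GChoice (WChoice e r s g) b (GChoice (WChoice e r s h) b
        (GChoice (WChoice f r s g) b (WChoice f r s h))))"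
    by (rule eqv.ba_GChoice) (simp add: ba_equiv_def)
  also have "eqv st \<dots> (GChoice (WChoice e r s g) b (WChoice f r s h))"
    by (rule eqv.trans[OF eqv_GChoice_GChoice_right eqv_GChoice_GChoice_right])
  finally show ?thesis .
qed

lemma eqv_Seq_odot: "eqv st (Seq (odot r) e) (WChoice e r 0 (Test BFalse))"
proof -
  have "eqv st (Seq (odot r) e) (WChoice (Seq (Test BTrue) e) r 0 (Seq (Test BFalse) e))"
    unfolding odot_def by (rule eqv.S4)
  also have "eqv st \<dots> (WChoice e r 0 (Test BFalse))" by (intro eqv.cong_WChoice eqv.S1a eqv.S3)
  finally show ?thesis .
qed

lemma eqv_WChoice_one_zero: "eqv st (WChoice e 1 0 f) e"
proof -
  have independent_of_f: "eqv st (WChoice e 1 0 f) (WChoice (odot 0) 1 1 e)" for f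
  proof -
    have "eqv st (WChoice e 1 0 f) (WChoice f (1 * 0) 1 e)" using eqv.W2 by simp
    also have "eqv st \<dots> (WChoice (Seq (odot 0) f) 1 1 e)" by (rule eqv.W4)
    also have "eqv st \<dots> (WChoice (odot 0) 1 1 e)" by (intro eqv.cong_WChoice eqv.C2 eqv.refl)
    finally show ?thesis .
  qed
  have "eqv st (WChoice e 1 0 f) (WChoice e 1 0 e)"
    by (rule eqv.trans[OF independent_of_f eqv.sym[OF independent_of_f]])
  also have "eqv st \<dots> (Seq (odot (1 + 0)) e)" by (rule eqv.W1)
  also have "eqv st \<dots> (Seq (Test BTrue) e)" using eqv.cong_Seq[OF eqv.C1 eqv.refl] by simp
  also have "eqv st \<dots> e" by (rule eqv.S1a)
  finally show ?thesis .
qed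

lemma eqv_WChoice_zero: "eqv st (WChoice e r 0 f) (Seq (odot r) e)"
proof -
  have "eqv st (WChoice e r 0 f) (WChoice (Seq (odot r) e) 1 0 f)"
    using eqv.W4[where r = 1 and u = r] by simp
  also have "eqv st \<dots> (Seq (odot r) e)" by (rule eqv_WChoice_one_zero)
  finally show ?thesis .
qed

lemma eqv_odot_Seq_WChoice: "eqv st (Seq (odot t) (WChoice e r s f)) (WChoice e (t * r) (t * s) f)"
proof -
  have "eqv st (Seq (odot t) (WChoice e r s f)) (WChoice (WChoice e r s f) t 0 (Test BFalse))"
    by (rule eqv_Seq_odot)
  also have "eqv st \<dots> (WChoice (Test BFalse) 0 t (WChoice e r s f))" by (rule eqv.W2)
  also have "eqv st \<dots> (WChoice (Test BFalse) 0 1 (WChoice e (t * r) (t * s) f))" by (rule eqv.D2)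
  also have "eqv st \<dots> (WChoice (WChoice e (t * r) (t * s) f) 1 0 (Test BFalse))" by (rule eqv.W2)
  also have "eqv st \<dots> (WChoice e (t * r) (t * s) f)" by (rule eqv_WChoice_one_zero)
  finally show ?thesis .
qed

lemma eqv_odot_Seq_odot: "eqv st (Seq (odot r) (odot s)) (odot (r * s))"
  using eqv_odot_Seq_WChoice[of st r _ s 0] by (simp add: odot_def)

lemma eqv_odot_Seq_GChoice:
  "eqv st (Seq (odot r) (GChoice e b f)) (GChoice (Seq (odot r) e) b (Seq (odot r) f))"
proof -
  have "eqv st (Seq (odot r) (GChoice e b f)) (WChoice (GChoice e b f) r 0 (Test BFalse))"
    by (rule eqv_Seq_odot)
  also have "eqv st \<dots> (GChoice (WChoice e r 0 (Test BFalse)) b (WChoice f r 0 (Test BFalse)))"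
    by (rule eqv_WChoice_GChoice_left)
  also have "eqv st \<dots> (GChoice (Seq (odot r) e) b (Seq (odot r) f))"
    by (intro eqv.cong_GChoice eqv.sym[OF eqv_Seq_odot])
  finally show ?thesis .
qed

lemma eqv_WChoice_odot_zero: "eqv st (WChoice g r s (odot 0)) (Seq (odot r) g)"
proof -
  have "eqv st (WChoice g r s (odot 0)) (WChoice (odot 0) s r g)" by (rule eqv.W2)
  also have "eqv st \<dots> (WChoice (Seq (odot 0) (odot 0)) s r g)"
    by (intro eqv.cong_WChoice eqv.sym[OF eqv.C2] eqv.refl)
  also have "eqv st \<dots> (WChoice (odot 0) (s * 0) r g)" by (rule eqv.sym, rule eqv.W4)
  also have "eqv st \<dots> (WChoice g r 0 (odot 0))" using eqv.W2 by simp
  also have "eqv st \<dots> (Seq (odot r) g)" by (rule eqv_WChoice_zero)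
  finally show ?thesis .
qed

lemma eqv_Seq_Test_WChoice_guard_left:
  "eqv st (Seq (Test b) (WChoice e r s f)) (Seq (Test b) (WChoice (Seq (Test b) e) r s f))"
proof -
  have "eqv st (Seq (Test b) (WChoice e r s f))
      (Seq (Test b) (WChoice (Seq (Test b) e) r s (Seq (Test b) f)))" by (rule eqv.D3)
  also have "eqv st \<dots> (Seq (Test b) (WChoice (Seq (Test b) (Seq (Test b) e)) r s (Seq (Test b) f)))"
    by (intro eqv.cong_Seq eqv.cong_WChoice eqv.refl eqv.sym[OF eqv_Seq_Test_Test])
  also have "eqv st \<dots> (Seq (Test b) (WChoice (Seq (Test b) e) r s f))" by (rule eqv.sym, rule eqv.D3)
  finally show ?thesis .
qed

lemma eqv_WChoice_WChoice_odot_zero: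
  "eqv st (WChoice g s t (WChoice e r u (odot 0))) (WChoice g s (t * r) e)"
proof -
  have "eqv st (WChoice g s t (WChoice e r u (odot 0))) (WChoice g s t (Seq (odot r) e))"
    by (intro eqv.cong_WChoice eqv.refl eqv_WChoice_odot_zero)
  also have "eqv st \<dots> (WChoice (Seq (odot r) e) t s g)" by (rule eqv.W2)
  also have "eqv st \<dots> (WChoice e (t * r) s g)" by (rule eqv.sym, rule eqv.W4)
  also have "eqv st \<dots> (WChoice g s (t * r) e)" by (rule eqv.W2)
  finally show ?thesis .
qed

theorem mainTheorem6:
  fixes st :: "'s::{semiring_0,monoid_mult} \<Rightarrow> 's"
    and b c :: "'t::finite bexp"
    and e f g h :: "('a, 't, 'o, 's) exp"
    and r s t u :: 's
  assumes "positive_semiring TYPE('s)"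
    and "refinement_semiring TYPE('s)"
    and "conway_star st"
  shows
    "(eqv st (Seq (odot t) (WChoice e r s f)) (WChoice e (t * r) (t * s) f)) \<and>
     (eqv st (GChoice e b (GChoice f c g)) (GChoice (GChoice e b f) (BOr b c) g)) \<and>
     (eqv st (GChoice e b (Test BFalse)) (Seq (Test b) e)) \<and>
     (eqv st (Seq (Test b) (GChoice e b f)) (Seq (Test b) e)) \<and>
     (eqv st (WChoice (GChoice e b f) r s g) (GChoice (WChoice e r s g) b (WChoice f r s g))) \<and>
     (eqv st (WChoice (GChoice e b f) r s (GChoice g b h)) (GChoice (WChoice e r s g) b (WChoice f r s h))) \<and>
     (eqv st (GChoice e BTrue f) e) \<and>
     (eqv st (Seq (Test b) (GChoice e c f)) (GChoice (Seq (Test b) e) c (Seq (Test b) f))) \<and>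
     (eqv st (Seq (Test b) (GChoice e c f)) (Seq (Test b) (GChoice (Seq (Test b) e) c f))) \<and>
     (eqv st (Seq (odot r) (odot s)) (odot (r * s))) \<and>
     (eqv st (Seq (odot r) (GChoice e b f)) (GChoice (Seq (odot r) e) b (Seq (odot r) f))) \<and>
     (eqv st (WChoice g r s (odot 0)) (Seq (odot r) g)) \<and>
     (eqv st (Seq (Test b) (WChoice e r s f)) (Seq (Test b) (WChoice (Seq (Test b) e) r s f))) \<and>
     (eqv st (WChoice g s t (WChoice e r u (odot 0))) (WChoice g s (t * r) e))"
  by (intro conjI
      eqv_odot_Seq_WChoice eqv_GChoice_assoc eqv_GChoice_BFalse_right eqv_Seq_Test_GChoice_same
      eqv_WChoice_GChoice_left eqv_WChoice_GChoice_both eqv_GChoice_BTrue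
      eqv_Seq_Test_GChoice_distrib eqv_Seq_Test_GChoice_guard_left eqv_odot_Seq_odot
      eqv_odot_Seq_GChoice eqv_WChoice_odot_zero eqv_Seq_Test_WChoice_guard_left
      eqv_WChoice_WChoice_odot_zero)

end
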